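(* Let $G=(V,E)$ be a graph with $|V|=n$ vertices, and let $P_{\text{match}}(G)\subset\mathbb{R}^E$ be its matching polytope. Then \[\mathrm{xc}\big(P_{\text{match}}(G)\big)\leq \ln(n)\cdot n^3\cdot 1.5^n .\]
   Context: The matching polytope of $G=(V,E)$ is $P_{\text{match}}(G)=\mathrm{conv}\{\chi_M : M\subset E \text{ a matching of } G\}\subset\mathbb{R}^E$, where $\chi_M$ is the characteristic vector of $M$. For a polytope $P$, write $|P|$ for its number of facets (the minimal number of inequalities in a description $\{x: Ax\le b, Cx=e\}$ of $P$). An affine extension of $P\subset\mathbb{R}^d$ is a polyhedron $Q\subset\mathbb{R}^{d'}$ together with an affine map $\pi$ with $\pi(Q)=P$. The extension complexity is $\mathrm{xc}(P)=\min\{|Q| : Q \text{ an affine extension of } P\}$. *)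

theory Defs
  imports "HOL-Analysis.Analysis"
begin

definition simple_graph :: "'a set \<Rightarrow> 'a set set \<Rightarrow> bool" where
  "simple_graph V E \<longleftrightarrow> finite V \<and>
     (\<forall>e\<in>E. \<exists>u v. u \<in> V \<and> v \<in> V \<and> u \<noteq> v \<and> e = {u, v})"

definition is_matching :: "'a set set \<Rightarrow> 'a set set \<Rightarrow> bool" where
  "is_matching E M \<longleftrightarrow> M \<subseteq> E \<and> (\<forall>e1\<in>M. \<forall>e2\<in>M. e1 \<noteq> e2 \<longrightarrow> e1 \<inter> e2 = {})"

text \<open>Points of R^E are functions E-indexed, vanishing outside E.
  Convex hull = set of all finite convex combinations.\<close>
definition conv_hull_fun :: "('b \<Rightarrow> real) set \<Rightarrow> ('b \<Rightarrow> real) set" where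
  "conv_hull_fun S = {x. \<exists>(k::nat) u c. (\<forall>i<k. 0 \<le> u i \<and> c i \<in> S) \<and>
       (\<Sum>i<k. u i) = 1 \<and> x = (\<lambda>j. \<Sum>i<k. u i * c i j)}"

definition matching_polytope :: "'a set set \<Rightarrow> ('a set \<Rightarrow> real) set" where
  "matching_polytope E = conv_hull_fun {indicator M | M. is_matching E M}"

text \<open>P \<subseteq> R^D has an affine extension Q = {y \<in> R^d'. Ay \<le> b, Cy = e} described
  with m inequalities, together with an affine map \<pi> y = Ty + t with \<pi>(Q) = P.\<close>
definition has_ext_with_ineqs :: "'b set \<Rightarrow> ('b \<Rightarrow> real) set \<Rightarrow> nat \<Rightarrow> bool" where
  "has_ext_with_ineqs D P m \<longleftrightarrow>
     (\<exists>(d'::nat) (p::nat) (A::nat \<Rightarrow> nat \<Rightarrow> real) (b::nat \<Rightarrow> real)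
        (C::nat \<Rightarrow> nat \<Rightarrow> real) (e::nat \<Rightarrow> real) (T::'b \<Rightarrow> nat \<Rightarrow> real) (t::'b \<Rightarrow> real).
        (\<lambda>y. \<lambda>i. if i \<in> D then (\<Sum>j<d'. T i j * y j) + t i else 0) `
          {y::nat \<Rightarrow> real. (\<forall>j\<ge>d'. y j = 0) \<and>
             (\<forall>r<m. (\<Sum>j<d'. A r j * y j) \<le> b r) \<and>
             (\<forall>r<p. (\<Sum>j<d'. C r j * y j) = e r)} = P)"

definition xc :: "'b set \<Rightarrow> ('b \<Rightarrow> real) set \<Rightarrow> nat" where
  "xc D P = (LEAST m. has_ext_with_ineqs D P m)"

end

theory Submission
  imports Defs
begin

definition fun_convex :: "('b \<Rightarrow> real) set \<Rightarrow> bool" where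
  "fun_convex X \<longleftrightarrow>
     (\<forall>x\<in>X. \<forall>y\<in>X. \<forall>t. 0 \<le> t \<and> t \<le> 1 \<longrightarrow> (\<lambda>j. t * x j + (1 - t) * y j) \<in> X)"

lemma fun_convexD:
  "fun_convex X \<Longrightarrow> x \<in> X \<Longrightarrow> y \<in> X \<Longrightarrow> 0 \<le> t \<Longrightarrow> t \<le> 1 \<Longrightarrow>
   (\<lambda>j. t * x j + (1 - t) * y j) \<in> X"
  unfolding fun_convex_def by blast

lemma fun_convex_sum:
  fixes u :: "nat \<Rightarrow> real"
  assumes X: "fun_convex X" and "\<forall>i<k. 0 \<le> u i \<and> c i \<in> X" and "(\<Sum>i<k. u i) = 1"
  shows "(\<lambda>j. \<Sum>i<k. u i * c i j) \<in> X"
  using assms(2,3)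
proof (induction k arbitrary: u)
  case 0
  then show ?case by simp
next
  case (Suc k)
  have "u k \<le> (\<Sum>i<Suc k. u i)"
    by (rule member_le_sum) (use Suc.prems in auto)
  then have uk: "0 \<le> u k" "u k \<le> 1" using Suc.prems by auto
  have ck: "c k \<in> X" using Suc.prems by auto
  show ?case
  proof (cases "u k = 1")
    case True
    then have "(\<Sum>i<k. u i) = 0" using Suc.prems by simp
    then have "\<forall>i<k. u i = 0" using Suc.prems by (subst (asm) sum_nonneg_eq_0_iff) auto
    then have "(\<lambda>j. \<Sum>i<Suc k. u i * c i j) = c k" using True by auto
    then show ?thesis using ck by simp
  next
    case False
    define w where "w i = u i / (1 - u k)" for i
    have "(\<Sum>i<k. w i) = 1"
      using False Suc.prems unfolding w_def by (simp add: sum_divide_distrib[symmetric])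
    moreover have "\<forall>i<k. 0 \<le> w i \<and> c i \<in> X" using Suc.prems uk unfolding w_def by auto
    ultimately have "(\<lambda>j. \<Sum>i<k. w i * c i j) \<in> X" using Suc.IH by blast
    then have "(\<lambda>j. (1 - u k) * (\<Sum>i<k. w i * c i j) + (1 - (1 - u k)) * c k j) \<in> X"
      using uk by (intro fun_convexD[OF X _ ck]) auto
    moreover have "(\<lambda>j. (1 - u k) * (\<Sum>i<k. w i * c i j) + (1 - (1 - u k)) * c k j)
        = (\<lambda>j. \<Sum>i<Suc k. u i * c i j)"
      using False unfolding w_def by (auto simp: sum_distrib_left)
    ultimately show ?thesis by simp
  qed
qed

lemma conv_hull_fun_minimal: "fun_convex X \<Longrightarrow> S \<subseteq> X \<Longrightarrow> conv_hull_fun S \<subseteq> X"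
  unfolding conv_hull_fun_def using fun_convex_sum[of X] by blast

lemma subset_conv_hull_fun: "S \<subseteq> conv_hull_fun S"
proof
  fix x assume "x \<in> S"
  then show "x \<in> conv_hull_fun S" unfolding conv_hull_fun_def
    by (intro CollectI exI[of _ "1::nat"] exI[of _ "\<lambda>_. 1::real"] exI[of _ "\<lambda>_. x"]) auto
qed

lemma conv_hull_fun_mono: "S \<subseteq> T \<Longrightarrow> conv_hull_fun S \<subseteq> conv_hull_fun T"
  unfolding conv_hull_fun_def by blast

lemma sum_lessThan_add: "(\<Sum>i<k + l. f i) = (\<Sum>i<k. f i) + (\<Sum>i<l. f (i + k))"
  for f :: "nat \<Rightarrow> 'c::comm_monoid_add"
  by (induction l) (simp_all add: add.commute add.left_commute)

lemma fun_convex_conv_hull_fun: "fun_convex (conv_hull_fun S)"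
  unfolding fun_convex_def
proof (intro ballI allI impI)
  fix x y and t :: real
  assume "x \<in> conv_hull_fun S" "y \<in> conv_hull_fun S" and t: "0 \<le> t \<and> t \<le> 1"
  then obtain k l :: nat and u c w d where
    x: "\<forall>i<k. 0 \<le> u i \<and> c i \<in> S" "(\<Sum>i<k. u i) = 1" "x = (\<lambda>j. \<Sum>i<k. u i * c i j)" and
    y: "\<forall>i<l. 0 \<le> w i \<and> d i \<in> S" "(\<Sum>i<l. w i) = 1" "y = (\<lambda>j. \<Sum>i<l. w i * d i j)"
    unfolding conv_hull_fun_def mem_Collect_eq by blast
  define u' where "u' i = (if i < k then t * u i else (1 - t) * w (i - k))" for i
  define c' where "c' i = (if i < k then c i else d (i - k))" for i
  have "\<forall>i<k + l. 0 \<le> u' i \<and> c' i \<in> S"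
    using x(1) y(1) t unfolding u'_def c'_def by (auto simp: not_less)
  moreover have "(\<Sum>i<k + l. u' i) = 1"
    using x(2) y(2) unfolding sum_lessThan_add u'_def by (simp add: sum_distrib_left[symmetric])
  moreover have "(\<lambda>j. t * x j + (1 - t) * y j) = (\<lambda>j. \<Sum>i<k + l. u' i * c' i j)"
    unfolding sum_lessThan_add u'_def c'_def x(3) y(3) by (simp add: sum_distrib_left mult.assoc)
  ultimately show "(\<lambda>j. t * x j + (1 - t) * y j) \<in> conv_hull_fun S"
    unfolding conv_hull_fun_def by blast
qed

lemma conv_hull_fun_sum:
  fixes u :: "nat \<Rightarrow> real"
  assumes "\<forall>i<k. 0 \<le> u i \<and> c i \<in> conv_hull_fun S" and "(\<Sum>i<k. u i) = 1"
  shows "(\<lambda>j. \<Sum>i<k. u i * c i j) \<in> conv_hull_fun S"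
  using fun_convex_sum[OF fun_convex_conv_hull_fun assms] .

lemma fun_convex_between:
  assumes X: "fun_convex X" and "0 < \<alpha>" "0 < \<beta>"
    and "(\<lambda>j. z j + \<alpha> * d j) \<in> X" "(\<lambda>j. z j - \<beta> * d j) \<in> X"
  shows "z \<in> X"
proof -
  define s where "s = \<beta> / (\<alpha> + \<beta>)"
  have "0 \<le> s" "s \<le> 1" unfolding s_def using assms(2,3) by auto
  with assms(4,5) have "(\<lambda>j. s * (z j + \<alpha> * d j) + (1 - s) * (z j - \<beta> * d j)) \<in> X"
    by (rule fun_convexD[OF X])
  moreover have "(\<lambda>j. s * (z j + \<alpha> * d j) + (1 - s) * (z j - \<beta> * d j)) = z"
  proof
    fix j
    have "s * \<alpha> = (1 - s) * \<beta>" using assms(2,3) unfolding s_def by (simp add: field_simps)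
    moreover have "s * (z j + \<alpha> * d j) + (1 - s) * (z j - \<beta> * d j)
        = z j + (s * \<alpha> - (1 - s) * \<beta>) * d j" by (simp add: algebra_simps)
    ultimately show "s * (z j + \<alpha> * d j) + (1 - s) * (z j - \<beta> * d j) = z j" by simp
  qed
  ultimately show ?thesis by simp
qed

lemma conv_hull_fun_singleton: "conv_hull_fun {z} = {z}"
proof
  have "fun_convex {z}" unfolding fun_convex_def by (auto simp: algebra_simps)
  then show "conv_hull_fun {z} \<subseteq> {z}" by (rule conv_hull_fun_minimal) simp
qed (rule subset_conv_hull_fun)

definition crossing :: "'a set \<Rightarrow> 'a set \<Rightarrow> bool" where
  "crossing A e \<longleftrightarrow> (\<exists>u v. e = {u, v} \<and> u \<in> A \<and> v \<notin> A)"

lemma crossing_insert_iff: "crossing A {x, y} \<Longrightarrow> y \<in> A \<longleftrightarrow> x \<notin> A"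
  unfolding crossing_def by (auto simp: doubleton_eq_iff)

lemma crossing_finite: "crossing A e \<Longrightarrow> finite e"
  unfolding crossing_def by auto

fun is_walk :: "'a set set \<Rightarrow> 'a list \<Rightarrow> bool" where
  "is_walk F (x # y # r) \<longleftrightarrow> {x, y} \<in> F \<and> is_walk F (y # r)"
| "is_walk F _ \<longleftrightarrow> True"

fun alternating :: "'a list \<Rightarrow> 'a set \<Rightarrow> real" where
  "alternating (x # y # r) e = of_bool (e = {x, y}) - alternating (y # r) e"
| "alternating _ e = 0"

lemma alternating_nonzero_in: "alternating ws e \<noteq> 0 \<Longrightarrow> is_walk F ws \<Longrightarrow> e \<in> F"
  by (induction ws e rule: alternating.induct) (auto simp: of_bool_def split: if_splits)

lemma alternating_nonzero_subset: "alternating ws e \<noteq> 0 \<Longrightarrow> e \<subseteq> set ws"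
  by (induction ws e rule: alternating.induct) (auto simp: of_bool_def split: if_splits)

lemma alternating_first_edge: "distinct (x # y # r) \<Longrightarrow> alternating (x # y # r) {x, y} = 1"
  using alternating_nonzero_subset[of "y # r" "{x, y}"] by fastforce

lemma sum_alternating_at:
  assumes "finite F" "is_walk F ws" "distinct ws" "2 \<le> length ws"
  shows "(\<Sum>e\<in>{e\<in>F. v \<in> e}. alternating ws e)
           = of_bool (v = hd ws) + (if v = last ws then (-1) ^ length ws else 0)"
  using assms(2-)
proof (induction ws rule: induct_list012)
  case (3 x y r)
  have "(\<Sum>e\<in>{e\<in>F. v \<in> e}. of_bool (e = {x, y})) = (of_bool (v = x \<or> v = y) :: real)"
    using \<open>finite F\<close> "3.prems"(1) by (simp add: sum.delta')
  then have step: "(\<Sum>e\<in>{e\<in>F. v \<in> e}. alternating (x # y # r) e)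
      = of_bool (v = x \<or> v = y) - (\<Sum>e\<in>{e\<in>F. v \<in> e}. alternating (y # r) e)"
    by (simp add: sum_subtractf)
  show ?case
  proof (cases r)
    case Nil
    then show ?thesis using step "3.prems" by auto
  next
    case (Cons z r')
    then have "(\<Sum>e\<in>{e\<in>F. v \<in> e}. alternating (y # r) e)
        = of_bool (v = y) + (if v = last (y # r) then (-1) ^ length (y # r) else 0)"
      using "3.IH"(2) "3.prems" by simp
    moreover have "x \<noteq> y" "x \<noteq> last (y # r)" using "3.prems"(2) by auto
    ultimately show ?thesis using step by (auto simp: of_bool_def)
  qed
qed auto

lemma is_walk_parity:
  "\<forall>e\<in>F. crossing A e \<Longrightarrow> is_walk F ws \<Longrightarrow> i < length ws \<Longrightarrow>
   ws ! i \<in> A \<longleftrightarrow> (ws ! 0 \<in> A \<longleftrightarrow> even i)"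
proof (induction F ws arbitrary: i rule: is_walk.induct)
  case (1 F x y r)
  have "y \<in> A \<longleftrightarrow> x \<notin> A" using "1.prems" crossing_insert_iff[of A x y] by simp
  moreover have "(y # r) ! j \<in> A \<longleftrightarrow> (y \<in> A \<longleftrightarrow> even j)" if "j < length (y # r)" for j
    using "1" that by simp
  ultimately show ?case using "1.prems"(3) by (auto simp: nth_Cons split: nat.split)
qed auto

lemma is_walk_take: "is_walk F ws \<Longrightarrow> is_walk F (take n ws)"
proof (induction F ws arbitrary: n rule: is_walk.induct)
  case (1 F x y r)
  have "is_walk F (take (Suc m) (y # r))" for m using "1.IH"[of "Suc m"] "1.prems" by simp
  then show ?case by (cases n; cases "n - 1") (use "1.prems" in auto)
qed (simp_all add: take_Cons')

lemma is_walk_snoc: "is_walk F (ws @ [z]) \<longleftrightarrow> is_walk F ws \<and> (ws \<noteq> [] \<longrightarrow> {last ws, z} \<in> F)"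
  by (induction F ws rule: is_walk.induct) auto

lemma is_walk_rev: "is_walk F ws \<Longrightarrow> is_walk F (rev ws)"
proof (induction F ws rule: is_walk.induct)
  case (1 F x y r)
  then have "is_walk F (rev (y # r) @ [x])" unfolding is_walk_snoc by (simp add: insert_commute)
  then show ?case by simp
qed simp_all

definition paths :: "'a set set \<Rightarrow> 'a list set" where
  "paths F = {ws. set ws \<subseteq> \<Union>F \<and> distinct ws \<and> is_walk F ws \<and> 2 \<le> length ws}"

lemma finite_paths:
  assumes "finite F" "\<forall>e\<in>F. finite e"
  shows "finite (paths F)"
proof -
  have fin: "finite (\<Union>F)" using assms by auto
  have "paths F \<subseteq> {ws. set ws \<subseteq> \<Union>F \<and> length ws \<le> card (\<Union>F)}"
    unfolding paths_def using card_mono[OF fin] by (auto simp: distinct_card[symmetric])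
  then show ?thesis using finite_lists_length_le[OF fin] by (rule finite_subset)
qed

lemma rev_paths: "ws \<in> paths F \<Longrightarrow> rev ws \<in> paths F"
  unfolding paths_def using is_walk_rev by auto

lemma exists_longest_path:
  assumes "finite F" "\<forall>e\<in>F. finite e" "ws\<^sub>0 \<in> paths F"
  obtains ws where "ws \<in> paths F" "\<forall>ws'\<in>paths F. length ws' \<le> length ws"
proof -
  have fin: "finite (paths F)" using finite_paths[OF assms(1,2)] .
  then have "Max (length ` paths F) \<in> length ` paths F" using assms(3) by (intro Max_in) auto
  then obtain ws where "ws \<in> paths F" "length ws = Max (length ` paths F)"
    by (metis (no_types) imageE)
  then show ?thesis using fin that by simp
qed

text \<open>A nonzero edge weighting supported on \<open>F\<close> whose sum vanishes at every vertex lying on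
  two or more edges of \<open>F\<close>; a fractional matching can be moved along it in both directions.\<close>
definition balanced_direction :: "'a set set \<Rightarrow> ('a set \<Rightarrow> real) \<Rightarrow> bool" where
  "balanced_direction F d \<longleftrightarrow> (\<forall>e. d e \<noteq> 0 \<longrightarrow> e \<in> F) \<and> (\<exists>e. d e \<noteq> 0) \<and>
     (\<forall>v. (\<Sum>e\<in>{e\<in>F. v \<in> e}. d e) = 0 \<or> (\<forall>e1\<in>F. \<forall>e2\<in>F. v \<in> e1 \<longrightarrow> v \<in> e2 \<longrightarrow> e1 = e2))"

lemma balanced_direction_uminus: "balanced_direction F d \<Longrightarrow> balanced_direction F (\<lambda>e. - d e)"
  unfolding balanced_direction_def by (simp add: sum_negf)

text \<open>An even cycle: the alternating weighting of the path \<open>cyc\<close> minus the closing edge.\<close>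
lemma balanced_direction_even_cycle:
  assumes fin: "finite F" and cyc: "is_walk F cyc" "distinct cyc" "even (length cyc)" "4 \<le> length cyc"
    and closing: "{last cyc, hd cyc} \<in> F"
  shows "\<exists>d. balanced_direction F d"
proof -
  obtain x y r where cycx: "cyc = x # y # r" using cyc(4) by (cases cyc; cases "tl cyc") auto
  define w where "w = last cyc"
  have "r \<noteq> []" using cyc(4) cycx by auto
  then have "w \<in> set r" unfolding w_def cycx by simp
  then have "w \<noteq> x" "w \<noteq> y" using cyc(2) cycx by auto
  have "hd cyc = x" using cycx by simp
  then have closing': "{w, x} \<in> F" using closing unfolding w_def by simp
  define d where "d e = alternating cyc e - of_bool (e = {w, x})" for e
  have "e \<in> F" if "d e \<noteq> 0" for e
  proof (cases "e = {w, x}")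
    case True
    then show ?thesis using closing' by simp
  next
    case False
    then have "alternating cyc e \<noteq> 0" using that unfolding d_def by simp
    then show ?thesis by (rule alternating_nonzero_in[OF _ cyc(1)])
  qed
  moreover have "d {x, y} = 1"
    using alternating_first_edge[of x y r] cyc(2) \<open>w \<noteq> x\<close> \<open>w \<noteq> y\<close>
    unfolding d_def cycx by (simp add: doubleton_eq_iff)
  moreover have "(\<Sum>e\<in>{e\<in>F. v \<in> e}. d e) = 0" for v
  proof -
    have "(\<Sum>e\<in>{e\<in>F. v \<in> e}. of_bool (e = {w, x})) = (of_bool (v = w \<or> v = x) :: real)"
      using fin closing' by (simp add: sum.delta')
    moreover have "(\<Sum>e\<in>{e\<in>F. v \<in> e}. alternating cyc e) = of_bool (v = x) + of_bool (v = w)"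
      using sum_alternating_at[OF fin cyc(1,2)] cyc(3,4) \<open>hd cyc = x\<close> unfolding w_def by simp
    ultimately show ?thesis using \<open>w \<noteq> x\<close> unfolding d_def by (simp add: sum_subtractf)
  qed
  ultimately show ?thesis unfolding balanced_direction_def by (metis zero_neq_one)
qed

text \<open>If a longest path \<open>ws\<close> has a further edge at its first vertex, then that edge closes a
  cycle with an initial segment of \<open>ws\<close>, which is even since the graph is bipartite.\<close>
lemma balanced_direction_of_head_edge:
  assumes fin: "finite F" and cr: "\<forall>e\<in>F. crossing A e"
    and ws: "ws \<in> paths F" and longest: "\<forall>ws'\<in>paths F. length ws' \<le> length ws"
    and e: "e \<in> F" "hd ws \<in> e" "e \<noteq> {hd ws, hd (tl ws)}"
  shows "\<exists>d. balanced_direction F d"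
proof -
  have wsP: "set ws \<subseteq> \<Union>F" "distinct ws" "is_walk F ws" "2 \<le> length ws"
    using ws unfolding paths_def by auto
  obtain x y r where wsx: "ws = x # y # r"
    using wsP(4) by (cases ws; cases "tl ws") auto
  obtain u v where uv: "e = {u, v}" "u \<in> A" "v \<notin> A" using cr e(1) unfolding crossing_def by blast
  obtain w where ew: "e = {x, w}" "w \<noteq> x"
    using e(2) uv wsx by (cases "x = u") (auto simp: insert_commute)
  have "w \<noteq> y" using e(3) ew wsx by auto
  have "w \<in> set ws"
  proof (rule ccontr)
    assume "w \<notin> set ws"
    then have "w # ws \<in> paths F"
      unfolding paths_def using wsP e(1) ew wsx by (auto simp: insert_commute)
    then show False using longest by fastforce
  qed
  then obtain j where j: "j < length ws" "ws ! j = w" by (auto simp: in_set_conv_nth)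
  have "j \<noteq> 0" using j(2) ew(2) wsx by (metis nth_Cons_0)
  have "j \<noteq> 1" using j(2) \<open>w \<noteq> y\<close> wsx by (metis One_nat_def nth_Cons_0 nth_Cons_Suc)
  have "w \<in> A \<longleftrightarrow> x \<notin> A" using cr e(1) ew crossing_insert_iff[of A x w] by simp
  then have "odd j" using is_walk_parity[OF cr wsP(3) j(1)] j wsx by auto
  define cyc where "cyc = take (Suc j) ws"
  have "distinct cyc" "is_walk F cyc" "length cyc = Suc j" "last cyc = w"
    using wsP(2,3) j unfolding cyc_def
    by (simp_all add: is_walk_take) (simp add: take_Suc_conv_app_nth)
  moreover have "even (length cyc)" "4 \<le> length cyc"
    using \<open>length cyc = Suc j\<close> \<open>j \<noteq> 0\<close> \<open>j \<noteq> 1\<close> \<open>odd j\<close> by presburger+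
  moreover have "{last cyc, hd cyc} \<in> F"
    using \<open>last cyc = w\<close> e(1) ew(1) unfolding cyc_def wsx by (simp add: insert_commute)
  ultimately show ?thesis using balanced_direction_even_cycle[OF fin] by blast
qed

text \<open>A path whose two ends have degree one: inner vertices see \<open>+1 - 1\<close> in its alternating
  weighting.\<close>
lemma balanced_direction_of_path:
  assumes fin: "finite F" and ws: "ws \<in> paths F"
    and ends: "\<And>v. v = hd ws \<or> v = last ws \<Longrightarrow> \<exists>c. \<forall>e\<in>F. v \<in> e \<longrightarrow> e = c"
  shows "\<exists>d. balanced_direction F d"
proof -
  have wsP: "distinct ws" "is_walk F ws" "2 \<le> length ws" using ws unfolding paths_def by auto
  obtain x y r where wsx: "ws = x # y # r" using wsP(3) by (cases ws; cases "tl ws") auto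
  have "(\<Sum>e\<in>{e\<in>F. v \<in> e}. alternating ws e) = 0
      \<or> (\<forall>e1\<in>F. \<forall>e2\<in>F. v \<in> e1 \<longrightarrow> v \<in> e2 \<longrightarrow> e1 = e2)" for v
  proof (cases "v = hd ws \<or> v = last ws")
    case True
    then obtain c where "\<forall>e\<in>F. v \<in> e \<longrightarrow> e = c" using ends by blast
    then show ?thesis by metis
  next
    case False
    then show ?thesis using sum_alternating_at[OF fin wsP(2,1,3)] by simp
  qed
  moreover have "alternating ws {x, y} \<noteq> 0"
    using alternating_first_edge[of x y r] wsP(1) wsx by simp
  moreover have "\<forall>e. alternating ws e \<noteq> 0 \<longrightarrow> e \<in> F" using alternating_nonzero_in wsP(2) by blast
  ultimately show ?thesis unfolding balanced_direction_def by blast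
qed

lemma crossing_edges_balanced_direction:
  assumes fin: "finite F" and ne: "F \<noteq> {}" and cr: "\<forall>e\<in>F. crossing A e"
  shows "\<exists>d. balanced_direction F d"
proof -
  obtain e0 where "e0 \<in> F" using ne by blast
  then obtain u v where uv: "e0 = {u, v}" "u \<in> A" "v \<notin> A" using cr unfolding crossing_def by blast
  have "{u, v} \<in> F" using \<open>e0 \<in> F\<close> uv(1) by simp
  then have "set [u, v] \<subseteq> \<Union>F" by auto
  moreover have "u \<noteq> v" using uv(2,3) by blast
  ultimately have "[u, v] \<in> paths F" using \<open>{u, v} \<in> F\<close> by (simp add: paths_def)
  moreover have "\<forall>e\<in>F. finite e" using cr crossing_finite by blast
  ultimately obtain ws where ws: "ws \<in> paths F" and longest: "\<forall>ws'\<in>paths F. length ws' \<le> length ws"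
    using exists_longest_path[OF fin] by blast
  show ?thesis
  proof (cases "\<exists>e\<in>F. hd ws \<in> e \<and> e \<noteq> {hd ws, hd (tl ws)}")
    case True
    then show ?thesis using balanced_direction_of_head_edge[OF fin cr ws longest] by blast
  next
    case no_head: False
    show ?thesis
    proof (cases "\<exists>e\<in>F. hd (rev ws) \<in> e \<and> e \<noteq> {hd (rev ws), hd (tl (rev ws))}")
      case True
      have "\<forall>ws'\<in>paths F. length ws' \<le> length (rev ws)" using longest by simp
      then show ?thesis using balanced_direction_of_head_edge[OF fin cr rev_paths[OF ws]] True by blast
    next
      case no_last: False
      have "ws \<noteq> []" using ws unfolding paths_def by auto
      have "\<exists>c. \<forall>e\<in>F. v \<in> e \<longrightarrow> e = c" if "v = hd ws \<or> v = last ws" for v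
        using that
      proof
        assume "v = hd ws"
        then show ?thesis using no_head by blast
      next
        assume "v = last ws"
        then have "v = hd (rev ws)" using \<open>ws \<noteq> []\<close> by (simp add: hd_rev)
        then show ?thesis using no_last by blast
      qed
      then show ?thesis by (rule balanced_direction_of_path[OF fin ws])
    qed
  qed
qed

definition fractional_matching :: "'a set set \<Rightarrow> ('a set \<Rightarrow> real) \<Rightarrow> bool" where
  "fractional_matching F z \<longleftrightarrow> (\<forall>e. e \<notin> F \<longrightarrow> z e = 0) \<and> (\<forall>e\<in>F. 0 \<le> z e) \<and>
     (\<forall>v. (\<Sum>e\<in>{e\<in>F. v \<in> e}. z e) \<le> 1)"

definition fractional_edges :: "'a set set \<Rightarrow> ('a set \<Rightarrow> real) \<Rightarrow> 'a set set" where
  "fractional_edges F z = {e\<in>F. 0 < z e \<and> z e < 1}"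

lemma fractional_matching_le_one:
  assumes "finite F" "{} \<notin> F" "fractional_matching F z" "e \<in> F"
  shows "z e \<le> 1"
proof -
  obtain v where v: "v \<in> e" using assms(2,4) by (metis ex_in_conv)
  have "z e \<le> (\<Sum>e\<in>{e\<in>F. v \<in> e}. z e)"
    by (rule member_le_sum) (use assms v in \<open>auto simp: fractional_matching_def\<close>)
  also have "\<dots> \<le> 1" using assms(3) by (simp add: fractional_matching_def)
  finally show ?thesis .
qed

lemma fractional_matching_sum_le_one:
  assumes "finite F" "fractional_matching F z" "E' \<subseteq> {e\<in>F. v \<in> e}"
  shows "(\<Sum>e\<in>E'. z e) \<le> 1"
proof -
  have "(\<Sum>e\<in>E'. z e) \<le> (\<Sum>e\<in>{e\<in>F. v \<in> e}. z e)"
    by (rule sum_mono2) (use assms in \<open>auto simp: fractional_matching_def\<close>)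
  also have "\<dots> \<le> 1" using assms(2) by (simp add: fractional_matching_def)
  finally show ?thesis .
qed

text \<open>At a vertex of degree two or more in the fractional edges the sum does not change; at
  any other vertex all edges but at most one fractional edge \<open>e\<^sub>0\<close> carry weight \<open>0\<close> (weight
  \<open>1\<close> is excluded since \<open>z e\<^sub>0 > 0\<close>), so the sum is the new value on \<open>e\<^sub>0\<close>.\<close>
lemma fractional_matching_add_balanced_direction:
  assumes fin: "finite F" and ne: "{} \<notin> F" and z: "fractional_matching F z"
    and d: "balanced_direction (fractional_edges F z) d"
    and box: "\<forall>e\<in>F. 0 \<le> z e + t * d e \<and> z e + t * d e \<le> 1"
  shows "fractional_matching F (\<lambda>e. z e + t * d e)"
proof -
  define Fr where "Fr = fractional_edges F z"
  have dFr: "d e = 0" if "e \<notin> Fr" for e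
    using d that unfolding balanced_direction_def Fr_def by blast
  have z0: "z e = 0" if "e \<notin> F" for e using z that unfolding fractional_matching_def by blast
  have "(\<Sum>e\<in>{e\<in>F. v \<in> e}. z e + t * d e) \<le> 1" for v
  proof -
    define S where "S = {e\<in>F. v \<in> e}"
    define S' where "S' = {e\<in>Fr. v \<in> e}"
    have finS: "finite S" using fin unfolding S_def by simp
    have "S' \<subseteq> S" unfolding S_def S'_def Fr_def fractional_edges_def by auto
    then have dS: "(\<Sum>e\<in>S. d e) = (\<Sum>e\<in>S'. d e)"
      using dFr by (intro sum.mono_neutral_right[OF finS]) (auto simp: S_def S'_def)
    have sum_z: "(\<Sum>e\<in>S. z e) \<le> 1" using z unfolding S_def fractional_matching_def by blast
    have split: "(\<Sum>e\<in>S. z e + t * d e) = (\<Sum>e\<in>S. z e) + t * (\<Sum>e\<in>S'. d e)"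
      unfolding dS[symmetric] by (simp add: sum.distrib sum_distrib_left)
    show ?thesis
    proof (cases "(\<Sum>e\<in>S'. d e) = 0")
      case True
      then show ?thesis using split sum_z unfolding S_def by simp
    next
      case False
      then have single: "\<forall>e1\<in>S'. \<forall>e2\<in>S'. e1 = e2"
        using d unfolding balanced_direction_def S'_def Fr_def by blast
      from False obtain e0 where e0: "e0 \<in> S'" by (metis sum.empty ex_in_conv)
      then have e0S: "e0 \<in> S" "0 < z e0" using \<open>S' \<subseteq> S\<close> unfolding S'_def Fr_def fractional_edges_def by auto
      have others: "z e + t * d e = 0" if "e \<in> S - {e0}" for e
      proof -
        have "e \<notin> Fr" using single e0 that unfolding S_def S'_def by blast
        moreover have "z e + z e0 \<le> 1"
          using fractional_matching_sum_le_one[OF fin z, of "{e, e0}" v] that e0S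
          unfolding S_def by auto
        ultimately show ?thesis
          using dFr e0S that z fractional_matching_le_one[OF fin ne z, of e]
          unfolding S_def Fr_def fractional_edges_def fractional_matching_def by force
      qed
      have "(\<Sum>e\<in>S. z e + t * d e) = z e0 + t * d e0"
        using e0S(1) finS others by (simp add: sum.remove)
      also have "\<dots> \<le> 1" using box e0S(1) unfolding S_def by auto
      finally show ?thesis unfolding S_def .
    qed
  qed
  then show ?thesis
    using z0 dFr box unfolding fractional_matching_def Fr_def fractional_edges_def by auto
qed

lemma fractional_matching_integral:
  assumes fin: "finite F" and ne: "{} \<notin> F" and z: "fractional_matching F z"
    and "fractional_edges F z = {}"
  shows "z \<in> {indicator M | M. is_matching F M}"
proof -
  define M where "M = {e\<in>F. z e = 1}"
  have "z = indicator M"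
  proof
    fix e
    have "e \<in> F \<Longrightarrow> z e = 0 \<or> z e = 1"
      using assms fractional_matching_le_one[OF fin ne z, of e]
      unfolding fractional_edges_def fractional_matching_def by force
    then show "z e = indicator M e"
      using z unfolding M_def fractional_matching_def by (auto simp: indicator_def)
  qed
  moreover have "e1 \<inter> e2 = {}" if "e1 \<in> M" "e2 \<in> M" "e1 \<noteq> e2" for e1 e2
  proof (rule ccontr)
    assume "e1 \<inter> e2 \<noteq> {}"
    then obtain v where "v \<in> e1" "v \<in> e2" by blast
    then have "z e1 + z e2 \<le> 1"
      using fractional_matching_sum_le_one[OF fin z, of "{e1, e2}" v] that unfolding M_def by auto
    then show False using that unfolding M_def by simp
  qed
  ultimately show ?thesis unfolding is_matching_def M_def by blast
qed

text \<open>The largest step \<open>t\<close> for which \<open>z + t * d\<close> stays in \<open>[0, 1]\<close>.\<close>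
definition max_step :: "real \<Rightarrow> real \<Rightarrow> real" where
  "max_step z d = (if 0 < d then (1 - z) / d else z / - d)"

lemma max_step_pos: "0 < z \<Longrightarrow> z < 1 \<Longrightarrow> d \<noteq> 0 \<Longrightarrow> 0 < max_step z d"
  unfolding max_step_def by (auto simp: field_simps)

lemma add_mult_in_unit_interval:
  assumes "0 < z" "z < 1" "d \<noteq> 0" "0 < t" "t \<le> max_step z d"
  shows "0 \<le> z + t * d \<and> z + t * d \<le> 1"
  using assms mult_pos_neg[of t d] mult_pos_pos[of t d] unfolding max_step_def
  by (auto simp: field_simps split: if_splits)

lemma add_max_step: "d \<noteq> 0 \<Longrightarrow> z + max_step z d * d = 0 \<or> z + max_step z d * d = 1"
  unfolding max_step_def by (auto simp: field_simps)

text \<open>Move along \<open>d\<close> until the first fractional edge becomes integral.\<close>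
lemma fractional_matching_step:
  assumes fin: "finite F" and ne: "{} \<notin> F" and z: "fractional_matching F z"
    and d: "balanced_direction (fractional_edges F z) d"
  shows "\<exists>t>0. fractional_matching F (\<lambda>e. z e + t * d e) \<and>
           fractional_edges F (\<lambda>e. z e + t * d e) \<subset> fractional_edges F z"
proof -
  define Fr where "Fr = fractional_edges F z"
  define supp where "supp = {e. d e \<noteq> 0}"
  have supp_Fr: "supp \<subseteq> Fr" using d unfolding balanced_direction_def supp_def Fr_def by auto
  have fin_supp: "finite supp" using finite_subset[OF supp_Fr] fin unfolding Fr_def fractional_edges_def by simp
  have "supp \<noteq> {}" using d unfolding balanced_direction_def supp_def by auto
  have frac: "e \<in> F" "0 < z e" "z e < 1" "d e \<noteq> 0" if "e \<in> supp" for e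
    using that supp_Fr unfolding supp_def Fr_def fractional_edges_def by auto
  define t where "t = Min ((\<lambda>e. max_step (z e) (d e)) ` supp)"
  have "t \<in> (\<lambda>e. max_step (z e) (d e)) ` supp" unfolding t_def using fin_supp \<open>supp \<noteq> {}\<close> by simp
  then obtain e1 where e1: "e1 \<in> supp" "t = max_step (z e1) (d e1)" by blast
  have "0 < t" using e1 frac max_step_pos by simp
  have box: "\<forall>e\<in>F. 0 \<le> z e + t * d e \<and> z e + t * d e \<le> 1"
  proof
    fix e assume "e \<in> F"
    show "0 \<le> z e + t * d e \<and> z e + t * d e \<le> 1"
    proof (cases "e \<in> supp")
      case False
      then show ?thesis using \<open>e \<in> F\<close> z fractional_matching_le_one[OF fin ne z]
        unfolding supp_def fractional_matching_def by auto
    next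
      case True
      have "t \<le> max_step (z e) (d e)" unfolding t_def using fin_supp True by simp
      then show ?thesis using frac[OF True] \<open>0 < t\<close> by (intro add_mult_in_unit_interval) auto
    qed
  qed
  have "fractional_edges F (\<lambda>e. z e + t * d e) \<subseteq> Fr - {e1}"
  proof
    fix e assume e: "e \<in> fractional_edges F (\<lambda>e. z e + t * d e)"
    have "e \<in> Fr" using e supp_Fr
      by (cases "d e = 0") (auto simp: supp_def Fr_def fractional_edges_def)
    moreover have "e \<noteq> e1"
      using e add_max_step[of "d e1" "z e1"] frac(4)[OF e1(1)] e1(2) unfolding fractional_edges_def
      by (auto simp: mult.commute)
    ultimately show "e \<in> Fr - {e1}" by simp
  qed
  then have "fractional_edges F (\<lambda>e. z e + t * d e) \<subset> Fr" using e1(1) supp_Fr by blast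
  then show ?thesis
    using fractional_matching_add_balanced_direction[OF fin ne z d box] \<open>0 < t\<close>
    unfolding Fr_def by blast
qed

lemma fun_convex_matching_polytope: "fun_convex (matching_polytope F)"
  unfolding matching_polytope_def by (rule fun_convex_conv_hull_fun)

text \<open>Integrality of the bipartite matching polytope, for the bipartite graph formed by the
  edges crossing a cut: a fractional point with a fractional edge is a proper convex combination
  of two points with fewer fractional edges.\<close>
theorem crossing_fractional_matching_in_matching_polytope:
  assumes fin: "finite F" and cr: "\<forall>e\<in>F. crossing A e" and z: "fractional_matching F z"
  shows "z \<in> matching_polytope F"
  using z
proof (induction z rule: measure_induct_rule[where f = "\<lambda>z. card (fractional_edges F z)"])
  case (less z)
  have ne: "{} \<notin> F" using cr unfolding crossing_def by auto
  have fin_Fr: "finite (fractional_edges F z)" using fin unfolding fractional_edges_def by simp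
  show ?case
  proof (cases "fractional_edges F z = {}")
    case True
    then have "z \<in> {indicator M | M. is_matching F M}"
      by (rule fractional_matching_integral[OF fin ne less.prems])
    then show ?thesis unfolding matching_polytope_def by (rule subsetD[OF subset_conv_hull_fun])
  next
    case False
    have "\<forall>e\<in>fractional_edges F z. crossing A e" using cr unfolding fractional_edges_def by auto
    then obtain d where d: "balanced_direction (fractional_edges F z) d"
      using crossing_edges_balanced_direction[OF fin_Fr False] by blast
    have in_polytope: "(\<lambda>e. z e + t * d' e) \<in> matching_polytope F"
      if "0 < t \<and> fractional_matching F (\<lambda>e. z e + t * d' e) \<and>
          fractional_edges F (\<lambda>e. z e + t * d' e) \<subset> fractional_edges F z" for t d'
      using less.IH psubset_card_mono[OF fin_Fr] that by blast
    obtain \<alpha> where \<alpha>: "0 < \<alpha> \<and> fractional_matching F (\<lambda>e. z e + \<alpha> * d e) \<and>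
        fractional_edges F (\<lambda>e. z e + \<alpha> * d e) \<subset> fractional_edges F z"
      using fractional_matching_step[OF fin ne less.prems d] by blast
    obtain \<beta> where \<beta>: "0 < \<beta> \<and> fractional_matching F (\<lambda>e. z e + \<beta> * - d e) \<and>
        fractional_edges F (\<lambda>e. z e + \<beta> * - d e) \<subset> fractional_edges F z"
      using fractional_matching_step[OF fin ne less.prems balanced_direction_uminus[OF d]] by blast
    have "(\<lambda>e. z e - \<beta> * d e) \<in> matching_polytope F" using in_polytope[OF \<beta>] by simp
    then show ?thesis
      using fun_convex_between[OF fun_convex_matching_polytope _ _ in_polytope[OF \<alpha>]] \<alpha> \<beta> by blast
  qed
qed

definition linear_form :: "(('j \<Rightarrow> real) \<Rightarrow> real) \<Rightarrow> bool" where
  "linear_form L \<longleftrightarrow> (\<forall>x y. L (\<lambda>j. x j + y j) = L x + L y) \<and> (\<forall>c x. L (\<lambda>j. c * x j) = c * L x)"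

lemma linear_form_zero_point:
  assumes "linear_form L"
  shows "L (\<lambda>_. 0) = 0"
proof -
  have "\<forall>c x. L (\<lambda>j. c * x j) = c * L x" using assms unfolding linear_form_def by blast
  from this[rule_format, of 0 "\<lambda>_. 0"] show ?thesis by simp
qed

lemma linear_form_sum: "finite S \<Longrightarrow> linear_form (\<lambda>y. \<Sum>k\<in>S. y (f k))"
  unfolding linear_form_def by (simp add: sum.distrib sum_distrib_left)

lemma linear_form_eq_sum:
  assumes "finite J" and L: "linear_form L" and "\<forall>j. j \<notin> J \<longrightarrow> y j = 0"
  shows "L y = (\<Sum>j\<in>J. L (indicator {j}) * y j)"
  using assms(1,3)
proof (induction J arbitrary: y rule: finite_induct)
  case empty
  then have "y = (\<lambda>_. 0)" by auto
  then show ?case using linear_form_zero_point[OF L] by simp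
next
  case (insert a J)
  define y' where "y' j = (if j = a then 0 else y j)" for j
  have "y = (\<lambda>j. y' j + y a * indicator {a} j)" unfolding y'_def by (auto simp: indicator_def)
  then have "L y = L y' + y a * L (indicator {a})" using L unfolding linear_form_def by metis
  also have "L y' = (\<Sum>j\<in>J. L (indicator {j}) * y' j)"
    using insert.IH insert.prems unfolding y'_def by simp
  also have "\<dots> = (\<Sum>j\<in>J. L (indicator {j}) * y j)"
    using insert.hyps unfolding y'_def by (intro sum.cong) auto
  finally show ?case using insert.hyps by (simp add: mult.commute)
qed

lemma all_less_bij_betw: "bij_betw g {..<n} B \<Longrightarrow> (\<forall>k<n. P (g k)) \<longleftrightarrow> (\<forall>b\<in>B. P b)"
  by (auto dest!: bij_betw_imp_surj_on)

lemma has_ext_with_ineqsI: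
  fixes d' p :: nat and A C :: "nat \<Rightarrow> nat \<Rightarrow> real" and b e :: "nat \<Rightarrow> real"
    and T :: "'b \<Rightarrow> nat \<Rightarrow> real" and t :: "'b \<Rightarrow> real"
  assumes "(\<lambda>y i. if i \<in> D then (\<Sum>j<d'. T i j * y j) + t i else 0) `
      {y. (\<forall>j\<ge>d'. y j = 0) \<and> (\<forall>r<m. (\<Sum>j<d'. A r j * y j) \<le> b r) \<and>
          (\<forall>r<p. (\<Sum>j<d'. C r j * y j) = e r)} = P"
  shows "has_ext_with_ineqs D P m"
  unfolding has_ext_with_ineqs_def
  by (rule exI[of _ d'], rule exI[of _ p], rule exI[of _ A], rule exI[of _ b], rule exI[of _ C],
      rule exI[of _ e], rule exI[of _ T], rule exI[of _ t]) (fact assms)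

definition reindex :: "(nat \<Rightarrow> 'j) \<Rightarrow> nat \<Rightarrow> (nat \<Rightarrow> real) \<Rightarrow> 'j \<Rightarrow> real" where
  "reindex f n y j = (if j \<in> f ` {..<n} then y (inv_into {..<n} f j) else 0)"

lemma linear_form_reindex:
  assumes f: "bij_betw f {..<n} J" and L: "linear_form L"
  shows "L (reindex f n y) = (\<Sum>k<n. L (indicator {f k}) * y k)"
proof -
  have J: "f ` {..<n} = J" using f by (simp add: bij_betw_def)
  have "L (reindex f n y) = (\<Sum>j\<in>J. L (indicator {j}) * reindex f n y j)"
    using J by (intro linear_form_eq_sum[OF _ L]) (auto simp: reindex_def)
  also have "\<dots> = (\<Sum>k<n. L (indicator {f k}) * reindex f n y (f k))"
    by (rule sum.reindex_bij_betw[OF f, symmetric])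
  also have "\<dots> = (\<Sum>k<n. L (indicator {f k}) * y k)"
    using f unfolding reindex_def by (intro sum.cong) (auto simp: bij_betw_def inv_into_f_f)
  finally show ?thesis .
qed

lemma reindex_inverse:
  assumes f: "bij_betw f {..<n} J" and "\<forall>j. j \<notin> J \<longrightarrow> Y j = 0"
  shows "reindex f n (\<lambda>k. if k < n then Y (f k) else 0) = Y"
proof
  fix j
  show "reindex f n (\<lambda>k. if k < n then Y (f k) else 0) j = Y j"
    using assms bij_betw_inv_into_right[OF f] inv_into_into[of j f "{..<n}"]
    unfolding reindex_def by (auto simp: bij_betw_def)
qed

text \<open>A polyhedron described by linear forms on functions supported on a finite index set \<open>J\<close>,
  with finitely many constraints indexed by arbitrary finite sets, fits the matrix format of
  \<^const>\<open>has_ext_with_ineqs\<close>: enumerate \<open>J\<close> by \<open>f\<close> and the constraints by \<open>g\<close>, \<open>h\<close>.\<close>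
lemma has_ext_with_ineqs_linear_forms:
  fixes J :: "'j set" and R :: "'r set" and Q :: "'q set"
    and Lr :: "'r \<Rightarrow> ('j \<Rightarrow> real) \<Rightarrow> real" and br :: "'r \<Rightarrow> real"
    and Lq :: "'q \<Rightarrow> ('j \<Rightarrow> real) \<Rightarrow> real" and eq :: "'q \<Rightarrow> real"
    and Tp :: "'b \<Rightarrow> ('j \<Rightarrow> real) \<Rightarrow> real" and t :: "'b \<Rightarrow> real"
  assumes finJ: "finite J" and finR: "finite R" and finQ: "finite Q"
    and linR: "\<forall>r\<in>R. linear_form (Lr r)" and linQ: "\<forall>q\<in>Q. linear_form (Lq q)"
    and linT: "\<forall>i. linear_form (Tp i)"
  shows "has_ext_with_ineqs D ((\<lambda>y i. if i \<in> D then Tp i y + t i else 0) `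
     {y. (\<forall>j. j \<notin> J \<longrightarrow> y j = 0) \<and> (\<forall>r\<in>R. Lr r y \<le> br r) \<and> (\<forall>q\<in>Q. Lq q y = eq q)}) (card R)"
proof -
  obtain f where f: "bij_betw f {..<card J} J"
    using ex_bij_betw_nat_finite[OF finJ] by (auto simp: atLeast0LessThan)
  obtain g where g: "bij_betw g {..<card R} R"
    using ex_bij_betw_nat_finite[OF finR] by (auto simp: atLeast0LessThan)
  obtain h where h: "bij_betw h {..<card Q} Q"
    using ex_bij_betw_nat_finite[OF finQ] by (auto simp: atLeast0LessThan)
  define FJ where "FJ = {y. (\<forall>j. j \<notin> J \<longrightarrow> y j = 0) \<and> (\<forall>r\<in>R. Lr r y \<le> br r) \<and> (\<forall>q\<in>Q. Lq q y = eq q)}"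
  define pJ where "pJ = (\<lambda>y i. if i \<in> D then Tp i y + t i else 0)"
  define coeff where "coeff L k = L (indicator {f k})" for L :: "('j \<Rightarrow> real) \<Rightarrow> real" and k
  define FN where "FN = {y. (\<forall>k\<ge>card J. y k = 0) \<and>
     (\<forall>r<card R. (\<Sum>k<card J. coeff (Lr (g r)) k * y k) \<le> br (g r)) \<and>
     (\<forall>q<card Q. (\<Sum>k<card J. coeff (Lq (h q)) k * y k) = eq (h q))}"
  define pN where "pN = (\<lambda>y i. if i \<in> D then (\<Sum>k<card J. coeff (Tp i) k * y k) + t i else 0)"
  have sum_coeff: "(\<Sum>k<card J. coeff L k * y k) = L (reindex f (card J) y)" if "linear_form L" for L y
    unfolding coeff_def using linear_form_reindex[OF f that] by simp
  have "(\<forall>r<card R. (\<Sum>k<card J. coeff (Lr (g r)) k * y k) \<le> br (g r))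
      \<longleftrightarrow> (\<forall>r\<in>R. Lr r (reindex f (card J) y) \<le> br r)"
    "(\<forall>q<card Q. (\<Sum>k<card J. coeff (Lq (h q)) k * y k) = eq (h q))
      \<longleftrightarrow> (\<forall>q\<in>Q. Lq q (reindex f (card J) y) = eq q)" for y
    using all_less_bij_betw[OF g] all_less_bij_betw[OF h] sum_coeff linR linQ bij_betwE[OF g] bij_betwE[OF h]
    by simp_all
  moreover have "reindex f (card J) y j = 0" if "j \<notin> J" for y j
    using that f unfolding reindex_def bij_betw_def by simp
  ultimately have FN_iff: "y \<in> FN \<longleftrightarrow> (\<forall>k\<ge>card J. y k = 0) \<and> reindex f (card J) y \<in> FJ" for y
    unfolding FN_def FJ_def by simp
  have pN_eq: "pN y = pJ (reindex f (card J) y)" for y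
  proof
    fix i
    show "pN y i = pJ (reindex f (card J) y) i"
      using sum_coeff[of "Tp i" y] linT unfolding pN_def pJ_def by simp
  qed
  have "pN ` FN = pJ ` FJ"
  proof
    show "pN ` FN \<subseteq> pJ ` FJ" using FN_iff pN_eq by auto
    show "pJ ` FJ \<subseteq> pN ` FN"
    proof
      fix x assume "x \<in> pJ ` FJ"
      then obtain Y where Y: "Y \<in> FJ" "x = pJ Y" by blast
      define y where "y k = (if k < card J then Y (f k) else 0)" for k
      have "reindex f (card J) y = Y" using reindex_inverse[OF f] Y(1) unfolding FJ_def y_def by blast
      then have "y \<in> FN" "x = pN y" using Y FN_iff pN_eq unfolding y_def by auto
      then show "x \<in> pN ` FN" by blast
    qed
  qed
  then show ?thesis unfolding FN_def pN_def FJ_def pJ_def by (rule has_ext_with_ineqsI)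
qed

lemma simple_graph_finite_edges:
  assumes "simple_graph V E"
  shows "finite V" "finite E"
proof -
  show "finite V" using assms unfolding simple_graph_def by blast
  moreover have "E \<subseteq> Pow V" using assms unfolding simple_graph_def by auto
  ultimately show "finite E" by (meson finite_Pow_iff finite_subset)
qed

lemma simple_graph_edgeD:
  assumes "simple_graph V E" "e \<in> E"
  obtains u v where "u \<in> V" "v \<in> V" "u \<noteq> v" "e = {u, v}"
  using assms unfolding simple_graph_def by blast

lemma is_matching_mono: "is_matching F M \<Longrightarrow> F \<subseteq> E \<Longrightarrow> is_matching E M"
  unfolding is_matching_def by auto

lemma matching_polytope_mono: "F \<subseteq> E \<Longrightarrow> matching_polytope F \<subseteq> matching_polytope E"
  unfolding matching_polytope_def
  by (intro conv_hull_fun_mono) (blast intro: is_matching_mono)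

lemma indicator_in_matching_polytope: "is_matching E M \<Longrightarrow> indicator M \<in> matching_polytope E"
  unfolding matching_polytope_def by (rule subsetD[OF subset_conv_hull_fun]) blast

lemma sum_indicator_matching_le_one:
  assumes M: "is_matching E M" and "finite S" "\<forall>e\<in>S. v \<in> e"
  shows "(\<Sum>e\<in>S. indicator M e :: real) \<le> 1"
proof (cases "S \<inter> M = {}")
  case True
  then show ?thesis by (simp add: indicator_def sum.neutral disjoint_iff)
next
  case False
  then obtain e0 where e0: "e0 \<in> S" "e0 \<in> M" by blast
  have "S \<inter> M = {e0}" using M e0 assms(3) unfolding is_matching_def by blast
  then have "(\<Sum>e\<in>S. indicator M e :: real) = (\<Sum>e\<in>S \<inter> M. 1)"
    using assms(2) by (simp add: indicator_def sum.If_cases)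
  then show ?thesis using \<open>S \<inter> M = {e0}\<close> by simp
qed

definition cut_cover :: "'a set set \<Rightarrow> (nat \<Rightarrow> 'a set) \<Rightarrow> nat \<Rightarrow> bool" where
  "cut_cover E A N \<longleftrightarrow> (\<forall>M. is_matching E M \<longrightarrow> (\<exists>a<N. \<forall>e\<in>M. crossing (A a) e))"

text \<open>Balas' extension of the convex hull of the union of the bipartite matching polytopes of
  the cuts \<open>A a\<close>: the variable \<open>y (a, None)\<close> is the weight \<open>\<lambda>\<^sub>a\<close> of the \<open>a\<close>-th polytope and
  \<open>y (a, Some e)\<close> is \<open>\<lambda>\<^sub>a\<close> times the \<open>e\<close>-coordinate of a point in it.\<close>
definition cut_lift :: "'a set \<Rightarrow> 'a set set \<Rightarrow> (nat \<Rightarrow> 'a set) \<Rightarrow> nat \<Rightarrow> (nat \<times> 'a set option \<Rightarrow> real) set" where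
  "cut_lift V E A N = {y.
     (\<forall>j. j \<notin> {..<N} \<times> insert None (Some ` E) \<longrightarrow> y j = 0) \<and>
     (\<forall>a<N. 0 \<le> y (a, None)) \<and> (\<forall>a<N. \<forall>e\<in>E. 0 \<le> y (a, Some e)) \<and>
     (\<forall>a<N. \<forall>v\<in>V. (\<Sum>e\<in>{e\<in>E. v \<in> e}. y (a, Some e)) \<le> y (a, None)) \<and>
     (\<Sum>a<N. y (a, None)) = 1 \<and>
     (\<forall>a<N. \<forall>e\<in>E. \<not> crossing (A a) e \<longrightarrow> y (a, Some e) = 0)}"

definition lift_proj :: "'a set set \<Rightarrow> nat \<Rightarrow> (nat \<times> 'a set option \<Rightarrow> real) \<Rightarrow> 'a set \<Rightarrow> real" where
  "lift_proj E N y = (\<lambda>e. if e \<in> E then \<Sum>a<N. y (a, Some e) else 0)"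

lemma has_ext_cut_lift:
  assumes finV: "finite V" and finE: "finite E"
  shows "has_ext_with_ineqs E (lift_proj E N ` cut_lift V E A N) (N * (card E + card V + 1))"
proof -
  define J where "J = {..<N} \<times> insert None (Some ` E)"
  define R where "R = {..<N} \<times> insert None (Some ` (Inl ` E \<union> Inr ` V))"
  define Q where "Q = insert None (Some ` ({..<N} \<times> E))"
  define Lr where "Lr r y = (case r of
      (a, None) \<Rightarrow> - y (a, None)
    | (a, Some (Inl e)) \<Rightarrow> - y (a, Some e)
    | (a, Some (Inr v)) \<Rightarrow> (\<Sum>e\<in>{e\<in>E. v \<in> e}. y (a, Some e)) - y (a, None))"
    for r :: "nat \<times> ('a set + 'a) option" and y :: "nat \<times> 'a set option \<Rightarrow> real"
  define Lq where "Lq q y = (case q of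
      None \<Rightarrow> \<Sum>a<N. y (a, None)
    | Some (a, e) \<Rightarrow> if crossing (A a) e then 0 else y (a, Some e))"
    for q :: "(nat \<times> 'a set) option" and y :: "nat \<times> 'a set option \<Rightarrow> real"
  define eq :: "(nat \<times> 'a set) option \<Rightarrow> real" where "eq q = (if q = None then 1 else 0)" for q
  define Tp where "Tp e y = (\<Sum>a<N. y (a, Some e))" for e and y :: "nat \<times> 'a set option \<Rightarrow> real"
  have "linear_form (Lr r)" for r
    unfolding linear_form_def Lr_def
    by (auto split: prod.split option.split sum.split simp: sum.distrib sum_distrib_left algebra_simps)
  moreover have "linear_form (Lq q)" for q
    unfolding linear_form_def Lq_def
    by (auto split: prod.split option.split simp: sum.distrib sum_distrib_left)
  moreover have "linear_form (Tp e)" for e unfolding Tp_def by (rule linear_form_sum) simp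
  ultimately have ext: "has_ext_with_ineqs E ((\<lambda>y e. if e \<in> E then Tp e y + 0 else 0) `
      {y. (\<forall>j. j \<notin> J \<longrightarrow> y j = 0) \<and> (\<forall>r\<in>R. Lr r y \<le> 0) \<and> (\<forall>q\<in>Q. Lq q y = eq q)}) (card R)"
    using has_ext_with_ineqs_linear_forms[of J R Q Lr Lq Tp E "\<lambda>_. 0" "\<lambda>_. 0" eq] finV finE
    unfolding J_def R_def Q_def by simp
  have "(\<forall>r\<in>R. Lr r y \<le> 0) \<longleftrightarrow> (\<forall>a<N. 0 \<le> y (a, None)) \<and>
      (\<forall>a<N. \<forall>e\<in>E. 0 \<le> y (a, Some e)) \<and>
      (\<forall>a<N. \<forall>v\<in>V. (\<Sum>e\<in>{e\<in>E. v \<in> e}. y (a, Some e)) \<le> y (a, None))" for y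
    unfolding R_def Lr_def by (auto simp: ball_Un Ball_image_comp)
  moreover have "(\<forall>q\<in>Q. Lq q y = eq q) \<longleftrightarrow> (\<Sum>a<N. y (a, None)) = 1 \<and>
      (\<forall>a<N. \<forall>e\<in>E. \<not> crossing (A a) e \<longrightarrow> y (a, Some e) = 0)" for y
    unfolding Q_def Lq_def eq_def by auto
  ultimately have lift_eq: "{y. (\<forall>j. j \<notin> J \<longrightarrow> y j = 0) \<and> (\<forall>r\<in>R. Lr r y \<le> 0) \<and> (\<forall>q\<in>Q. Lq q y = eq q)}
      = cut_lift V E A N"
    unfolding cut_lift_def J_def by simp
  have proj_eq: "(\<lambda>y e. if e \<in> E then Tp e y + 0 else 0) = lift_proj E N"
    unfolding Tp_def lift_proj_def by (simp add: fun_eq_iff)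
  have "card (Inl ` E \<union> Inr ` V) = card E + card V"
    using finE finV by (subst card_Un_disjoint) (auto simp: card_image)
  then have card_eq: "card R = N * (card E + card V + 1)"
    using finE finV unfolding R_def by (simp add: card_cartesian_product card_image)
  show ?thesis using ext unfolding lift_eq proj_eq card_eq .
qed

lemma cut_lift_edge_le_weight:
  assumes sg: "simple_graph V E" and y: "y \<in> cut_lift V E A N" and "a < N" "e \<in> E"
  shows "y (a, Some e) \<le> y (a, None)"
proof -
  obtain u v where "u \<in> V" "e = {u, v}" using simple_graph_edgeD[OF sg \<open>e \<in> E\<close>] by metis
  have "y (a, Some e) \<le> (\<Sum>e'\<in>{e'\<in>E. u \<in> e'}. y (a, Some e'))"
    using simple_graph_finite_edges(2)[OF sg] y assms(3,4) \<open>e = {u, v}\<close>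
    by (intro member_le_sum) (auto simp: cut_lift_def)
  also have "\<dots> \<le> y (a, None)" using y \<open>u \<in> V\<close> \<open>a < N\<close> unfolding cut_lift_def by blast
  finally show ?thesis .
qed

definition lift_block :: "'a set set \<Rightarrow> (nat \<times> 'a set option \<Rightarrow> real) \<Rightarrow> nat \<Rightarrow> 'a set \<Rightarrow> real" where
  "lift_block E y a e = (if e \<in> E \<and> 0 < y (a, None) then y (a, Some e) / y (a, None) else 0)"

lemma fractional_matching_lift_block:
  assumes sg: "simple_graph V E" and y: "y \<in> cut_lift V E A N" and "a < N" and pos: "0 < y (a, None)"
  shows "fractional_matching {e\<in>E. crossing (A a) e} (lift_block E y a)"
  unfolding fractional_matching_def
proof (intro conjI allI ballI impI)
  fix e assume "e \<notin> {e\<in>E. crossing (A a) e}"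
  then show "lift_block E y a e = 0" using y \<open>a < N\<close> unfolding lift_block_def cut_lift_def by auto
next
  fix e assume "e \<in> {e\<in>E. crossing (A a) e}"
  then show "0 \<le> lift_block E y a e" using y \<open>a < N\<close> pos unfolding lift_block_def cut_lift_def by auto
next
  fix v
  show "(\<Sum>e\<in>{e\<in>{e\<in>E. crossing (A a) e}. v \<in> e}. lift_block E y a e) \<le> 1"
  proof (cases "v \<in> V")
    case True
    have "(\<Sum>e\<in>{e\<in>{e\<in>E. crossing (A a) e}. v \<in> e}. lift_block E y a e)
        = (\<Sum>e\<in>{e\<in>E. crossing (A a) e \<and> v \<in> e}. y (a, Some e)) / y (a, None)"
      unfolding lift_block_def using pos by (simp add: sum_divide_distrib conj_ac)
    also have "\<dots> \<le> (\<Sum>e\<in>{e\<in>E. v \<in> e}. y (a, Some e)) / y (a, None)"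
      using simple_graph_finite_edges(2)[OF sg] y \<open>a < N\<close> pos
      by (intro divide_right_mono sum_mono2) (auto simp: cut_lift_def)
    also have "\<dots> \<le> 1" using y \<open>a < N\<close> pos True unfolding cut_lift_def by simp
    finally show ?thesis .
  next
    case False
    then have "{e\<in>{e\<in>E. crossing (A a) e}. v \<in> e} = {}" by (auto elim: simple_graph_edgeD[OF sg])
    then show ?thesis by (simp only: sum.empty zero_le_one)
  qed
qed

lemma lift_block_in_matching_polytope:
  assumes sg: "simple_graph V E" and y: "y \<in> cut_lift V E A N" and "a < N"
  shows "lift_block E y a \<in> matching_polytope E"
proof (cases "0 < y (a, None)")
  case False
  then have "lift_block E y a = indicator {}" unfolding lift_block_def by (simp add: fun_eq_iff)
  then show ?thesis using indicator_in_matching_polytope[of E "{}"] by (simp add: is_matching_def)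
next
  case True
  have "lift_block E y a \<in> matching_polytope {e\<in>E. crossing (A a) e}"
    using simple_graph_finite_edges(2)[OF sg]
    by (intro crossing_fractional_matching_in_matching_polytope[of _ "A a"]
        fractional_matching_lift_block[OF sg y \<open>a < N\<close> True]) auto
  then show ?thesis using matching_polytope_mono[of "{e\<in>E. crossing (A a) e}" E] by blast
qed

lemma lift_proj_eq_sum_lift_block:
  assumes sg: "simple_graph V E" and y: "y \<in> cut_lift V E A N"
  shows "lift_proj E N y = (\<lambda>e. \<Sum>a<N. y (a, None) * lift_block E y a e)"
proof
  fix e
  have "y (a, Some e) = y (a, None) * lift_block E y a e" if "a < N" "e \<in> E" for a
  proof (cases "0 < y (a, None)")
    case False
    then show ?thesis
      using y that cut_lift_edge_le_weight[OF sg y that] unfolding cut_lift_def lift_block_def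
      by (auto intro: antisym)
  qed (simp add: lift_block_def that)
  then show "lift_proj E N y e = (\<Sum>a<N. y (a, None) * lift_block E y a e)"
    unfolding lift_proj_def lift_block_def by auto
qed

lemma lift_proj_cut_lift_subset:
  assumes sg: "simple_graph V E"
  shows "lift_proj E N ` cut_lift V E A N \<subseteq> matching_polytope E"
proof
  fix x assume "x \<in> lift_proj E N ` cut_lift V E A N"
  then obtain y where y: "y \<in> cut_lift V E A N" and x: "x = lift_proj E N y" by blast
  have "(\<lambda>e. \<Sum>a<N. y (a, None) * lift_block E y a e) \<in> matching_polytope E"
    using y lift_block_in_matching_polytope[OF sg y] unfolding matching_polytope_def cut_lift_def
    by (intro conv_hull_fun_sum) auto
  then show "x \<in> matching_polytope E" using lift_proj_eq_sum_lift_block[OF sg y] x by simp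
qed

lemma fun_convex_image:
  assumes X: "fun_convex X"
    and P: "\<And>x y t. P (\<lambda>j. t * x j + (1 - t) * y j) = (\<lambda>i. t * P x i + (1 - t) * P y i)"
  shows "fun_convex (P ` X)"
  unfolding fun_convex_def
proof (intro ballI allI impI)
  fix u v and t :: real assume "u \<in> P ` X" "v \<in> P ` X" and t: "0 \<le> t \<and> t \<le> 1"
  then obtain x y where "x \<in> X" "y \<in> X" "u = P x" "v = P y" by blast
  then have "P (\<lambda>j. t * x j + (1 - t) * y j) \<in> P ` X" using fun_convexD[OF X] t by blast
  then show "(\<lambda>i. t * u i + (1 - t) * v i) \<in> P ` X" using P[of t x y] \<open>u = P x\<close> \<open>v = P y\<close> by simp
qed

lemma fun_convex_cut_lift: "fun_convex (cut_lift V E A N)"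
  unfolding fun_convex_def
proof (intro ballI allI impI)
  fix y1 y2 and t :: real
  assume y1: "y1 \<in> cut_lift V E A N" and y2: "y2 \<in> cut_lift V E A N" and t: "0 \<le> t \<and> t \<le> 1"
  have "(\<Sum>e\<in>{e\<in>E. v \<in> e}. t * y1 (a, Some e) + (1 - t) * y2 (a, Some e))
      \<le> t * y1 (a, None) + (1 - t) * y2 (a, None)" if "a < N" "v \<in> V" for a v
  proof -
    have "(\<Sum>e\<in>{e\<in>E. v \<in> e}. t * y1 (a, Some e) + (1 - t) * y2 (a, Some e))
        = t * (\<Sum>e\<in>{e\<in>E. v \<in> e}. y1 (a, Some e)) + (1 - t) * (\<Sum>e\<in>{e\<in>E. v \<in> e}. y2 (a, Some e))"
      by (simp add: sum.distrib sum_distrib_left)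
    also have "\<dots> \<le> t * y1 (a, None) + (1 - t) * y2 (a, None)"
      using y1 y2 that t by (intro add_mono mult_left_mono) (auto simp: cut_lift_def)
    finally show ?thesis .
  qed
  moreover have "(\<Sum>a<N. t * y1 (a, None) + (1 - t) * y2 (a, None))
      = t * (\<Sum>a<N. y1 (a, None)) + (1 - t) * (\<Sum>a<N. y2 (a, None))"
    by (simp add: sum.distrib sum_distrib_left)
  ultimately show "(\<lambda>j. t * y1 j + (1 - t) * y2 j) \<in> cut_lift V E A N"
    using y1 y2 t unfolding cut_lift_def by auto
qed

lemma lift_proj_convex_comb:
  "lift_proj E N (\<lambda>j. t * y1 j + (1 - t) * y2 j)
     = (\<lambda>e. t * lift_proj E N y1 e + (1 - t) * lift_proj E N y2 e)"
  unfolding lift_proj_def by (auto simp: sum.distrib sum_distrib_left)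

lemma matching_polytope_subset_lift_proj:
  assumes sg: "simple_graph V E" and cover: "cut_cover E A N"
  shows "matching_polytope E \<subseteq> lift_proj E N ` cut_lift V E A N"
  unfolding matching_polytope_def
proof (rule conv_hull_fun_minimal)
  show "fun_convex (lift_proj E N ` cut_lift V E A N)"
    by (rule fun_convex_image[OF fun_convex_cut_lift lift_proj_convex_comb])
  show "{indicator M | M. is_matching E M} \<subseteq> lift_proj E N ` cut_lift V E A N"
  proof
    fix x :: "'a set \<Rightarrow> real" assume "x \<in> {indicator M | M. is_matching E M}"
    then obtain M where M: "is_matching E M" and x: "x = indicator M" by blast
    obtain a0 where a0: "a0 < N" "\<forall>e\<in>M. crossing (A a0) e" using cover M unfolding cut_cover_def by blast
    define y :: "nat \<times> 'a set option \<Rightarrow> real"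
      where "y j = (if fst j = a0 then (case snd j of None \<Rightarrow> 1 | Some e \<Rightarrow> indicator M e) else 0)"
      for j
    have "M \<subseteq> E" using M unfolding is_matching_def by blast
    have "(\<Sum>e\<in>{e\<in>E. v \<in> e}. indicator M e :: real) \<le> 1" for v
      using simple_graph_finite_edges(2)[OF sg] by (intro sum_indicator_matching_le_one[OF M]) auto
    then have "y \<in> cut_lift V E A N"
      using \<open>M \<subseteq> E\<close> a0 unfolding cut_lift_def y_def
      by (auto simp: indicator_def split: option.split)
    moreover have "lift_proj E N y = x"
      using \<open>M \<subseteq> E\<close> a0(1) unfolding lift_proj_def y_def x by (auto simp: indicator_def fun_eq_iff)
    ultimately show "x \<in> lift_proj E N ` cut_lift V E A N" by blast
  qed
qed

theorem has_ext_matching_polytope_of_cut_cover: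
  assumes sg: "simple_graph V E" and cover: "cut_cover E A N"
  shows "has_ext_with_ineqs E (matching_polytope E) (N * (card E + card V + 1))"
proof -
  have "lift_proj E N ` cut_lift V E A N = matching_polytope E"
    using lift_proj_cut_lift_subset[OF sg] matching_polytope_subset_lift_proj[OF sg cover] by blast
  then show ?thesis using has_ext_cut_lift[OF simple_graph_finite_edges[OF sg], of N A] by simp
qed

lemma simple_graph_card_edge:
  assumes "simple_graph V E" "e \<in> E"
  shows "card e = 2" "e \<subseteq> V"
  using assms by (auto elim!: simple_graph_edgeD)

lemma matching_card_le:
  assumes sg: "simple_graph V E" and M: "is_matching E M"
  shows "2 * card M \<le> card V"
proof -
  have ME: "M \<subseteq> E" using M unfolding is_matching_def by blast
  have "finite e" if "e \<in> M" for e
    using simple_graph_card_edge(1)[OF sg] ME that by (metis card.infinite subsetD zero_neq_numeral)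
  then have "card (\<Union>M) = (\<Sum>e\<in>M. card e)"
    using M unfolding is_matching_def by (intro card_Union_disjoint) (auto simp: disjoint_def disjnt_def)
  also have "\<dots> = (\<Sum>e\<in>M. 2)" using ME simple_graph_card_edge(1)[OF sg] by (intro sum.cong) auto
  also have "\<dots> = 2 * card M" by simp
  finally have "card (\<Union>M) = 2 * card M" .
  moreover have "\<Union>M \<subseteq> V" using ME simple_graph_card_edge[OF sg] by auto
  ultimately show ?thesis using card_mono[OF simple_graph_finite_edges(1)[OF sg]] by metis
qed

lemma crossing_extended_cut:
  assumes M: "is_matching E M" and rr: "\<And>e. e \<in> M \<Longrightarrow> e = {r e, r' e} \<and> r e \<noteq> r' e"
    and B: "B \<inter> r' ` M = {}" and e: "e \<in> M"
  shows "crossing (B \<union> {r' e' | e'. e' \<in> M \<and> r e' \<notin> B}) e"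
proof -
  have disj: "e1 = e2" if "e1 \<in> M" "e2 \<in> M" "x \<in> e1" "x \<in> e2" for e1 e2 x
    using M that unfolding is_matching_def by (metis IntI empty_iff)
  show ?thesis
  proof (cases "r e \<in> B")
    case True
    have "r' e \<notin> B" using B e by blast
    moreover have "r' e \<noteq> r' e'" if "e' \<in> M" "r e' \<notin> B" for e'
      using that True disj[OF e that(1), of "r' e"] rr[OF e] rr[OF that(1)] by auto
    ultimately show ?thesis unfolding crossing_def using True rr[OF e] by blast
  next
    case False
    have "r e \<noteq> r' e'" if "e' \<in> M" for e'
      using disj[OF e that, of "r e"] rr[OF e] rr[OF that] by auto
    then have "r e \<notin> B \<union> {r' e' | e'. e' \<in> M \<and> r e' \<notin> B}" using False by blast
    moreover have "e = {r' e, r e}" using rr[OF e] by auto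
    ultimately show ?thesis unfolding crossing_def using False e by blast
  qed
qed

lemma card_cuts_crossing_matching:
  assumes sg: "simple_graph V E" and M: "is_matching E M"
  shows "2 ^ (card V - card M) \<le> card {A \<in> Pow V. \<forall>e\<in>M. crossing A e}"
proof -
  have ME: "M \<subseteq> E" using M unfolding is_matching_def by blast
  have finV: "finite V" using simple_graph_finite_edges[OF sg] by simp
  have "\<exists>u v. e = {u, v} \<and> u \<noteq> v \<and> u \<in> V \<and> v \<in> V" if "e \<in> M" for e
    using ME that simple_graph_edgeD[OF sg] by (metis subsetD)
  then obtain r r' where rr: "\<And>e. e \<in> M \<Longrightarrow> e = {r e, r' e} \<and> r e \<noteq> r' e \<and> r e \<in> V \<and> r' e \<in> V"
    by metis
  have "inj_on r' M"
  proof (rule inj_onI)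
    fix e1 e2 assume "e1 \<in> M" "e2 \<in> M" "r' e1 = r' e2"
    moreover have "r' e1 \<in> e1" "r' e2 \<in> e2" using rr \<open>e1 \<in> M\<close> \<open>e2 \<in> M\<close> by auto
    ultimately show "e1 = e2" using M unfolding is_matching_def by (metis IntI empty_iff)
  qed
  define H where "H = r' ` M"
  have "card H = card M" unfolding H_def using \<open>inj_on r' M\<close> by (rule card_image)
  have "H \<subseteq> V" unfolding H_def using rr by blast
  define ext where "ext B = B \<union> {r' e | e. e \<in> M \<and> r e \<notin> B}" for B
  have ext_crossing: "ext B \<in> {A \<in> Pow V. \<forall>e\<in>M. crossing A e}" if "B \<in> Pow (V - H)" for B
    using that rr crossing_extended_cut[OF M, of r r' B] unfolding ext_def H_def by blast
  have "inj_on ext (Pow (V - H))"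
  proof (rule inj_onI)
    fix B1 B2 assume "B1 \<in> Pow (V - H)" "B2 \<in> Pow (V - H)" "ext B1 = ext B2"
    moreover have "ext B - H = B" if "B \<in> Pow (V - H)" for B
      using that unfolding ext_def H_def by blast
    ultimately show "B1 = B2" by metis
  qed
  then have "2 ^ (card V - card M) = card (ext ` Pow (V - H))"
    using finV \<open>H \<subseteq> V\<close> \<open>card H = card M\<close>
    by (simp add: card_image card_Pow card_Diff_subset finite_subset)
  also have "\<dots> \<le> card {A \<in> Pow V. \<forall>e\<in>M. crossing A e}"
    using finV ext_crossing by (intro card_mono) auto
  finally show ?thesis .
qed

text \<open>A matching is determined by the map sending each covered vertex to its partner and
  every other vertex of \<open>V\<close> to itself.\<close>
definition partner :: "'a set \<Rightarrow> 'a set set \<Rightarrow> 'a \<Rightarrow> 'a" where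
  "partner V M v = (if v \<in> V then if \<exists>e\<in>M. v \<in> e then SOME u. {v, u} \<in> M else v else undefined)"

lemma partner_edge:
  assumes sg: "simple_graph V E" and M: "is_matching E M" and v: "v \<in> e" and e: "e \<in> M"
  shows "{v, partner V M v} = e" "partner V M v \<noteq> v" "v \<in> V" "partner V M v \<in> V"
proof -
  have "e \<in> E" using M e unfolding is_matching_def by blast
  then obtain a b where "a \<in> V" "b \<in> V" "a \<noteq> b" "e = {a, b}" by (rule simple_graph_edgeD[OF sg])
  then obtain u where u: "e = {v, u}" "u \<noteq> v" "v \<in> V" "u \<in> V"
    using v by (metis insert_commute insertE singletonD)
  have "{v, partner V M v} \<in> M"
    using someI[of "\<lambda>u. {v, u} \<in> M"] u e unfolding partner_def by auto
  then show "{v, partner V M v} = e"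
    using M e v unfolding is_matching_def by (metis IntI empty_iff insertI1)
  then show "partner V M v \<noteq> v" "v \<in> V" "partner V M v \<in> V"
    using u by (auto simp: doubleton_eq_iff)
qed

lemma partner_in_PiE:
  assumes sg: "simple_graph V E" and M: "is_matching E M"
  shows "partner V M \<in> V \<rightarrow>\<^sub>E V"
proof (rule PiE_I)
  fix v assume "v \<in> V"
  show "partner V M v \<in> V"
  proof (cases "\<exists>e\<in>M. v \<in> e")
    case True
    then show ?thesis using partner_edge(4)[OF sg M] by blast
  next
    case False
    then show ?thesis using \<open>v \<in> V\<close> unfolding partner_def by simp
  qed
qed (simp add: partner_def)

lemma matching_eq_partner_edges:
  assumes sg: "simple_graph V E" and M: "is_matching E M"
  shows "M = {{v, partner V M v} | v. v \<in> V \<and> partner V M v \<noteq> v}"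
proof (intro equalityI subsetI)
  fix e assume e: "e \<in> M"
  then have "e \<in> E" using M unfolding is_matching_def by blast
  then obtain a b where "e = {a, b}" by (rule simple_graph_edgeD[OF sg])
  then have "a \<in> e" by simp
  then show "e \<in> {{v, partner V M v} | v. v \<in> V \<and> partner V M v \<noteq> v}"
    using partner_edge[OF sg M \<open>a \<in> e\<close> e] by blast
next
  fix e assume "e \<in> {{v, partner V M v} | v. v \<in> V \<and> partner V M v \<noteq> v}"
  then obtain v where v: "e = {v, partner V M v}" "v \<in> V" "partner V M v \<noteq> v" by blast
  then obtain e' where "e' \<in> M" "v \<in> e'" unfolding partner_def by (metis (full_types))
  then show "e \<in> M" using partner_edge(1)[OF sg M] v(1) by simp
qed

lemma card_matchings_le:
  assumes sg: "simple_graph V E"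
  shows "finite {M. is_matching E M}" "card {M. is_matching E M} \<le> card V ^ card V"
proof -
  have finV: "finite V" and finE: "finite E" using simple_graph_finite_edges[OF sg] by auto
  have "{M. is_matching E M} \<subseteq> Pow E" by (auto simp: is_matching_def)
  then show "finite {M. is_matching E M}" using finE by (meson finite_Pow_iff finite_subset)
  have "M \<in> (\<lambda>f. {{v, f v} | v. v \<in> V \<and> f v \<noteq> v}) ` (V \<rightarrow>\<^sub>E V)" if "is_matching E M" for M
    using matching_eq_partner_edges[OF sg that] partner_in_PiE[OF sg that] by (rule image_eqI)
  then have "card {M. is_matching E M} \<le> card ((\<lambda>f. {{v, f v} | v. v \<in> V \<and> f v \<noteq> v}) ` (V \<rightarrow>\<^sub>E V))"
    using finV by (intro card_mono) (auto simp: finite_PiE)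
  also have "\<dots> \<le> card (V \<rightarrow>\<^sub>E V)" using finV by (intro card_image_le) (simp add: finite_PiE)
  also have "\<dots> = card V ^ card V" using finV by (simp add: card_PiE)
  finally show "card {M. is_matching E M} \<le> card V ^ card V" .
qed

text \<open>The union bound behind the probabilistic method: if every "good" set \<open>G M\<close> has density at
  least \<open>q\<close> in \<open>U\<close>, then a uniformly random \<open>N\<close>-tuple misses some \<open>G M\<close> with probability at most
  \<open>card Ms * (1 - q) ^ N < 1\<close>, so some tuple meets every \<open>G M\<close>.\<close>
lemma exists_tuple_meeting_all:
  fixes U :: "'u set" and G :: "'m \<Rightarrow> 'u set" and q :: real
  assumes "finite U" "U \<noteq> {}" "finite Ms"
    and G: "\<And>M. M \<in> Ms \<Longrightarrow> G M \<subseteq> U \<and> q * card U \<le> card (G M)"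
    and small: "card Ms * (1 - q) ^ N < 1"
  shows "\<exists>f. \<forall>M\<in>Ms. \<exists>a<N. f a \<in> G M"
proof -
  define tuples where "tuples = PiE {..<N} (\<lambda>_. U)"
  define miss where "miss M = PiE {..<N} (\<lambda>_. U - G M)" for M
  have card_tuples: "card tuples = card U ^ N" unfolding tuples_def by (simp add: card_PiE)
  have "real (card (miss M)) \<le> ((1 - q) * card U) ^ N" if "M \<in> Ms" for M
  proof -
    have sub: "G M \<subseteq> U" using G[OF that] by blast
    then have "card (U - G M) = card U - card (G M)"
      using \<open>finite U\<close> by (simp add: card_Diff_subset finite_subset)
    then have "real (card (U - G M)) = real (card U) - real (card (G M))"
      using card_mono[OF \<open>finite U\<close> sub] by (simp add: of_nat_diff)
    also have "\<dots> \<le> (1 - q) * card U"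
      using G[OF that] by (simp add: algebra_simps)
    finally show ?thesis unfolding miss_def by (simp add: card_PiE power_mono)
  qed
  then have "(\<Sum>M\<in>Ms. real (card (miss M))) \<le> card Ms * ((1 - q) * card U) ^ N"
    using sum_bounded_above[of Ms "\<lambda>M. real (card (miss M))"] by simp
  moreover have "real (card (\<Union>M\<in>Ms. miss M)) \<le> (\<Sum>M\<in>Ms. real (card (miss M)))"
    using card_UN_le[OF \<open>finite Ms\<close>, of miss] by (simp flip: of_nat_sum)
  ultimately have "real (card (\<Union>M\<in>Ms. miss M)) \<le> card Ms * ((1 - q) * card U) ^ N"
    by linarith
  also have "\<dots> = (card Ms * (1 - q) ^ N) * card U ^ N" by (simp add: power_mult_distrib)
  also have "\<dots> < card tuples"
    using small \<open>finite U\<close> \<open>U \<noteq> {}\<close> unfolding card_tuples by (simp add: card_gt_0_iff)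
  finally have "card (\<Union>M\<in>Ms. miss M) < card tuples" by simp
  moreover have "finite (\<Union>M\<in>Ms. miss M)"
    using \<open>finite Ms\<close> \<open>finite U\<close> unfolding miss_def by (simp add: finite_PiE)
  ultimately have "\<not> tuples \<subseteq> (\<Union>M\<in>Ms. miss M)" using card_mono by (metis not_le)
  then obtain f where f: "f \<in> tuples" "\<forall>M\<in>Ms. f \<notin> miss M" by blast
  have "\<exists>a<N. f a \<in> G M" if "M \<in> Ms" for M
  proof (rule ccontr)
    assume "\<not> (\<exists>a<N. f a \<in> G M)"
    then have "f \<in> miss M" using f(1) unfolding tuples_def miss_def by (auto simp: PiE_iff)
    then show False using f(2) that by blast
  qed
  then show ?thesis by blast
qed

lemma four_thirds_power_le:
  fixes n m :: nat
  assumes "2 * m \<le> n"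
  shows "(4 / 3 :: real) ^ n \<le> 2 ^ (n - m)"
proof -
  have "((2::nat) ^ (n + m))\<^sup>2 \<le> (3 ^ n)\<^sup>2"
  proof -
    have "((2::nat) ^ (n + m))\<^sup>2 = 2 ^ (2 * n + 2 * m)" by (simp add: power_mult[symmetric] algebra_simps)
    also have "\<dots> \<le> 2 ^ (3 * n)" using assms by (intro power_increasing) auto
    also have "\<dots> = 8 ^ n" by (simp add: power_mult)
    also have "\<dots> \<le> 9 ^ n" by (intro power_mono) auto
    also have "\<dots> = (3 ^ n)\<^sup>2" by (simp add: power2_eq_square power_mult_distrib[symmetric])
    finally show ?thesis .
  qed
  then have "(2::real) ^ (n + m) \<le> 3 ^ n"
    by (metis of_nat_le_iff of_nat_numeral of_nat_power power2_le_imp_le zero_le_power zero_le_numeral)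
  then have "(4 / 3 :: real) ^ n * 2 ^ (n + m) \<le> (4 / 3) ^ n * 3 ^ n" by (intro mult_left_mono) auto
  also have "\<dots> = 2 ^ (n + n)" by (simp add: power_add power_mult_distrib[symmetric])
  also have "\<dots> = 2 ^ (n - m) * 2 ^ (n + m)"
    using assms by (simp add: power_mult_distrib[symmetric] power_add[symmetric])
  finally show ?thesis by simp
qed

text \<open>Proof by the probabilistic method with \<open>N\<close> independent uniform cuts: a fixed matching
  \<open>M\<close> is crossed by a random cut with probability \<open>2 ^ (- card M) \<ge> (2/3) ^ n\<close>, and there are at
  most \<open>n ^ n\<close> matchings.\<close>
theorem cut_cover_exists:
  assumes sg: "simple_graph V E" and "1 \<le> card V"
    and N: "real N > card V * ln (card V) * 1.5 ^ card V"
  shows "\<exists>A. cut_cover E A N"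
proof -
  define n where "n = card V"
  define q :: real where "q = (2 / 3) ^ n"
  have finV: "finite V" using simple_graph_finite_edges[OF sg] by simp
  have "0 < n" using assms(2) unfolding n_def by simp
  have "0 < q" "q \<le> 1" unfolding q_def by (simp_all add: power_le_one)
  have "q * card (Pow V) \<le> card {A \<in> Pow V. \<forall>e\<in>M. crossing A e}" if "is_matching E M" for M
  proof -
    have "q * card (Pow V) = (4 / 3) ^ n"
      using finV unfolding q_def n_def by (simp add: card_Pow power_mult_distrib[symmetric])
    also have "\<dots> \<le> 2 ^ (n - card M)"
      using four_thirds_power_le matching_card_le[OF sg that] unfolding n_def by blast
    also have "\<dots> \<le> card {A \<in> Pow V. \<forall>e\<in>M. crossing A e}"
      using card_cuts_crossing_matching[OF sg that] unfolding n_def by (simp flip: of_nat_le_iff)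
    finally show ?thesis .
  qed
  moreover have "card {M. is_matching E M} * (1 - q) ^ N < 1"
  proof -
    have "n * ln n < N * q"
      using N \<open>0 < q\<close> unfolding n_def q_def
      by (auto simp: field_simps power_mult_distrib[symmetric] dest: mult_strict_right_mono[of _ _ q])
    moreover have "0 \<le> n * ln n" using \<open>0 < n\<close> by simp
    ultimately have "0 < N" by (cases N) auto
    have "(1 - q) ^ N \<le> exp (- (N * q))"
      using exp_ge_one_minus_x_over_n_power_n[of "N * q" N] \<open>q \<le> 1\<close> \<open>0 < N\<close> by simp
    also have "\<dots> < exp (- (n * ln n))" using \<open>n * ln n < N * q\<close> by simp
    also have "\<dots> = 1 / n ^ n" using \<open>0 < n\<close> by (simp add: exp_minus exp_of_nat_mult inverse_eq_divide)
    finally have "(1 - q) ^ N < 1 / n ^ n" .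
    have "card {M. is_matching E M} * (1 - q) ^ N \<le> n ^ n * (1 - q) ^ N"
      using card_matchings_le(2)[OF sg] \<open>q \<le> 1\<close> unfolding n_def
      by (intro mult_right_mono) (simp_all flip: of_nat_power)
    also have "\<dots> < n ^ n * (1 / n ^ n)"
      using \<open>(1 - q) ^ N < 1 / n ^ n\<close> \<open>0 < n\<close> by (intro mult_strict_left_mono) simp_all
    also have "\<dots> = 1" using \<open>0 < n\<close> by simp
    finally show ?thesis .
  qed
  moreover have "{A \<in> Pow V. \<forall>e\<in>M. crossing A e} \<subseteq> Pow V" for M by blast
  ultimately obtain A where "\<forall>M\<in>{M. is_matching E M}. \<exists>a<N. A a \<in> {A \<in> Pow V. \<forall>e\<in>M. crossing A e}"
    using exists_tuple_meeting_all[of "Pow V" "{M. is_matching E M}" "\<lambda>M. {A \<in> Pow V. \<forall>e\<in>M. crossing A e}" q N]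
      finV card_matchings_le(1)[OF sg] by blast
  then show ?thesis unfolding cut_cover_def by blast
qed

lemma xc_le: "has_ext_with_ineqs D P m \<Longrightarrow> xc D P \<le> m"
  unfolding xc_def by (rule Least_le)

lemma xc_matching_polytope_le_of_cut_cover:
  "simple_graph V E \<Longrightarrow> cut_cover E A N \<Longrightarrow>
   xc E (matching_polytope E) \<le> N * (card E + card V + 1)"
  by (intro xc_le has_ext_matching_polytope_of_cut_cover)

lemma matching_polytope_empty: "matching_polytope {} = {\<lambda>_. 0}"
proof -
  have "{indicator M | M. is_matching {} M} = {indicator {} :: 'a set \<Rightarrow> real}"
    unfolding is_matching_def by auto
  then show ?thesis unfolding matching_polytope_def by (simp add: conv_hull_fun_singleton fun_eq_iff)
qed

lemma xc_zero_point: "xc D {\<lambda>_. 0} = 0"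
proof -
  have "(\<lambda>y i. if i \<in> D then (\<Sum>j<0. (\<lambda>_ _. 0) i j * y j) + 0 else 0) `
      {y. (\<forall>j\<ge>0. y j = 0) \<and> (\<forall>r<0. (\<Sum>j<0. (\<lambda>_ _. 0) r j * y j) \<le> 0) \<and>
          (\<forall>r<0. (\<Sum>j<0. (\<lambda>_ _. 0) r j * y j) = 0)} = {\<lambda>_. 0 :: real}"
    by (auto simp: fun_eq_iff)
  then have "has_ext_with_ineqs D {\<lambda>_. 0} 0" by (rule has_ext_with_ineqsI)
  then show ?thesis using xc_le by fastforce
qed

lemma card_edges_le:
  assumes sg: "simple_graph V E"
  shows "2 * card E \<le> card V * (card V - 1)"
proof -
  have finV: "finite V" using simple_graph_finite_edges[OF sg] by simp
  have "E \<subseteq> {B. B \<subseteq> V \<and> card B = 2}" using simple_graph_card_edge[OF sg] by auto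
  then have "card E \<le> card {B. B \<subseteq> V \<and> card B = 2}"
    using finV by (intro card_mono) (auto intro: finite_subset)
  also have "\<dots> = card V choose 2" using n_subsets[OF finV] by simp
  also have "\<dots> = card V * (card V - 1) div 2" by (rule choose_two)
  finally show ?thesis by linarith
qed

lemma cover_size_arith:
  fixes n m :: nat
  assumes n: "3 \<le> n" and m: "2 * m \<le> n * (n - 1)"
  defines "a \<equiv> real n * ln (real n) * 1.5 ^ n"
  shows "real (nat \<lfloor>a\<rfloor> + 1) * (real m + real n + 1) \<le> ln (real n) * real n ^ 3 * 1.5 ^ n"
proof -
  have "exp 1 \<le> real n" using exp_le n by linarith
  then have "1 \<le> ln n" using n by (subst ln_ge_iff) auto
  have "(1.5::real) ^ 3 \<le> 1.5 ^ n" using n by (intro power_increasing) auto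
  then have "3 * 1 * 1.5 ^ 3 \<le> a" unfolding a_def using n \<open>1 \<le> ln n\<close> by (intro mult_mono) auto
  then have "10 \<le> a" by (simp add: power3_eq_cube)
  then have N: "real (nat \<lfloor>a\<rfloor> + 1) \<le> a + 1" by linarith
  have "real (2 * m) \<le> real (n * (n - 1))" using m by (simp only: of_nat_le_iff)
  then have m': "real m \<le> real n * (real n - 1) / 2" using n by (simp add: of_nat_diff)
  have "real (nat \<lfloor>a\<rfloor> + 1) * (real m + real n + 1) \<le> (a + 1) * (real n * (real n - 1) / 2 + n + 1)"
    using N m' \<open>10 \<le> a\<close> by (intro mult_mono) auto
  also have "\<dots> = (a * (real n * n) + a * n + 2 * a + (real n * n + n + 2)) / 2"
    by (simp add: field_simps)
  also have "\<dots> \<le> (a * (real n * n) + a * n + 2 * a + a * (real n * n - n - 2)) / 2"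
  proof -
    have "3 * real n \<le> real n * n" using n by (intro mult_right_mono) auto
    moreover have "3 \<le> real n" using n by simp
    ultimately have "22 + 11 * real n \<le> 9 * (real n * n)" "0 \<le> real n * n - n - 2" by linarith+
    then have "real n * n + n + 2 \<le> 10 * (real n * n - n - 2)" by (simp add: algebra_simps)
    also have "\<dots> \<le> a * (real n * n - n - 2)"
      using \<open>10 \<le> a\<close> \<open>0 \<le> real n * n - n - 2\<close> by (intro mult_right_mono) auto
    finally show ?thesis by simp
  qed
  also have "\<dots> = a * n ^ 2" by (simp add: power2_eq_square algebra_simps)
  also have "\<dots> = ln (real n) * real n ^ 3 * 1.5 ^ n" unfolding a_def by (simp add: power2_eq_square power3_eq_cube)
  finally show ?thesis .
qed

lemma xc_matching_polytope_card_le_1: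
  assumes sg: "simple_graph V E" and "card V \<le> 1"
  shows "xc E (matching_polytope E) = 0"
proof -
  have "E = {}"
  proof (rule ccontr)
    assume "E \<noteq> {}"
    then obtain e where "e \<in> E" by blast
    then have "card e \<le> card V"
      using simple_graph_card_edge(2)[OF sg] card_mono[OF simple_graph_finite_edges(1)[OF sg]] by blast
    then show False using assms(2) simple_graph_card_edge(1)[OF sg \<open>e \<in> E\<close>] by simp
  qed
  then show ?thesis by (simp add: matching_polytope_empty xc_zero_point)
qed

lemma xc_matching_polytope_card_2:
  assumes sg: "simple_graph V E" and "card V = 2"
  shows "xc E (matching_polytope E) \<le> 4"
proof -
  obtain u v where V: "V = {u, v}" "u \<noteq> v" using assms(2) unfolding card_2_iff by blast
  have "crossing {u} e" if "e \<in> E" for e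
  proof -
    have "e = V" using simple_graph_card_edge[OF sg that] assms(2)
      card_subset_eq[OF simple_graph_finite_edges(1)[OF sg]] by metis
    then show ?thesis unfolding crossing_def using V by blast
  qed
  then have "cut_cover E (\<lambda>_. {u}) 1" unfolding cut_cover_def is_matching_def by auto
  then have "xc E (matching_polytope E) \<le> card E + 3"
    using xc_matching_polytope_le_of_cut_cover[OF sg] assms(2) by fastforce
  moreover have "card E \<le> 1" using card_edges_le[OF sg] assms(2) by simp
  ultimately show ?thesis by simp
qed

lemma xc_matching_polytope_card_ge_3:
  assumes sg: "simple_graph V E" and n: "3 \<le> card V"
  shows "real (xc E (matching_polytope E)) \<le> ln (real (card V)) * real (card V) ^ 3 * 1.5 ^ card V"
proof -
  define a where "a = real (card V) * ln (card V) * 1.5 ^ card V"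
  define N where "N = nat \<lfloor>a\<rfloor> + 1"
  have "0 \<le> a" using n unfolding a_def by simp
  then have "real N = real_of_int \<lfloor>a\<rfloor> + 1" unfolding N_def by simp
  then have "a < N" using floor_correct[of a] unfolding of_int_add of_int_1 by linarith
  then obtain A where "cut_cover E A N" using cut_cover_exists[OF sg] n unfolding a_def by auto
  then have "xc E (matching_polytope E) \<le> N * (card E + card V + 1)"
    using xc_matching_polytope_le_of_cut_cover[OF sg] by blast
  then have "real (xc E (matching_polytope E)) \<le> real N * (real (card E) + real (card V) + 1)"
    by (metis of_nat_1 of_nat_add of_nat_mono of_nat_mult)
  also have "\<dots> \<le> ln (real (card V)) * real (card V) ^ 3 * 1.5 ^ card V"
    unfolding N_def a_def by (rule cover_size_arith[OF n card_edges_le[OF sg]])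
  finally show ?thesis .
qed

theorem theorem4:
  fixes V :: "'a set" and E :: "'a set set"
  assumes "simple_graph V E"
  shows "real (xc E (matching_polytope E))
           \<le> ln (real (card V)) * real (card V) ^ 3 * 1.5 ^ card V"
proof -
  consider "card V \<le> 1" | "card V = 2" | "3 \<le> card V" by linarith
  then show ?thesis
  proof cases
    case 1
    then show ?thesis using xc_matching_polytope_card_le_1[OF assms] by (auto simp: le_Suc_eq)
  next
    case 2
    then show ?thesis
      using xc_matching_polytope_card_2[OF assms] ln2_ge_two_thirds by (auto simp: power2_eq_square)
  next
    case 3
    then show ?thesis by (rule xc_matching_polytope_card_ge_3[OF assms])
  qed
qed

end
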